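(* Let $\Lambda$ be a lattice of signature $(1,n-1)$, $h\in\Lambda$ with $(h^2)>0$, $\mathcal C^+:=\{x\in\Lambda_{\mathbb R}:(x^2)>0,\ (x,h)>0\}$, and $N>0$. Let $P\subset\Lambda_{\mathbb R}$ be a 2-plane defined over $\mathbb Q$ such that $P_{\mathbb Q}=P\cap\Lambda_{\mathbb Q}$ contains a nonzero isotropic vector. Then the set $\{v\in\Lambda : v^\perp\cap P\cap\mathcal C^+\neq\emptyset,\ (v^2)>-N\}$ is finite.
   Context: $(x^2)$ abbreviates $(x,x)$; $v^\perp$ is the orthogonal hyperplane in $\Lambda_{\mathbb R}$. *)

theory Defs
  imports "HOL-Analysis.Analysis"
begin

text \<open>A lattice of rank n is modelled as Z^n inside R^n = real^'n, with the symmetric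
  bilinear form given by a symmetric integer Gram matrix Q.\<close>

definition integral_vec :: "real^'n \<Rightarrow> bool" where
  "integral_vec x \<longleftrightarrow> (\<forall>i. x $ i \<in> \<int>)"

definition rational_vec :: "real^'n \<Rightarrow> bool" where
  "rational_vec x \<longleftrightarrow> (\<forall>i. x $ i \<in> \<rat>)"

definition bform :: "real^'n^'n \<Rightarrow> real^'n \<Rightarrow> real^'n \<Rightarrow> real" where
  "bform Q x y = x \<bullet> (Q *v y)"

definition lattice_gram :: "real^'n^'n \<Rightarrow> bool" where
  "lattice_gram Q \<longleftrightarrow> transpose Q = Q \<and> (\<forall>i j. Q $ i $ j \<in> \<int>)"

definition signature_1_nm1 :: "real^'n^'n \<Rightarrow> bool" where
  "signature_1_nm1 Q \<longleftrightarrow> (\<exists>(S::real^'n^'n) i0. invertible S \<and>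
     transpose S ** Q ** S = (\<chi> i j. if i = j then (if i = i0 then 1 else -1) else 0))"

definition pos_cone :: "real^'n^'n \<Rightarrow> real^'n \<Rightarrow> (real^'n) set" where
  "pos_cone Q h = {x. bform Q x x > 0 \<and> bform Q x h > 0}"

definition rational_2plane :: "(real^'n) set \<Rightarrow> bool" where
  "rational_2plane P \<longleftrightarrow> (\<exists>a b. rational_vec a \<and> rational_vec b \<and> P = span {a, b}) \<and> dim P = 2"

end

theory Submission
  imports Defs
begin

text \<open>Pick x0 \<in> P with (x0^2) > 0 and an integral basis E, F of P with E isotropic and
  c = (E, F) \<noteq> 0. Split v = p + q with p \<in> P and q \<perp> P. Since v and q are orthogonal to
  a positive vector of P, so is p, and signature (1, n-1) gives (p^2), (q^2) \<le> 0; hence both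
  exceed -N. The form is negative definite on the orthogonal complement of x0, which bounds q.
  For p, the numbers \<alpha> = (v, E) and y = 2c(v, F) - (F^2)\<alpha> are integers with c^2 (p^2) = \<alpha>y,
  so -N c^2 \<le> \<alpha>y < 0 unless p = 0; this bounds \<alpha>, y and therefore p. Thus v ranges over
  integral vectors of bounded norm.\<close>

lemma bform_sym: "transpose Q = Q \<Longrightarrow> bform Q x y = bform Q y x"
  unfolding bform_def by (metis dot_lmul_matrix inner_commute transpose_matrix_vector)

lemma bform_add_left: "bform Q (x + y) z = bform Q x z + bform Q y z"
  by (simp add: bform_def inner_add_left)

lemma bform_add_right: "bform Q z (x + y) = bform Q z x + bform Q z y"
  by (simp add: bform_def matrix_vector_right_distrib inner_add_right)

lemma bform_diff_left: "bform Q (x - y) z = bform Q x z - bform Q y z"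
  by (simp add: bform_def inner_diff_left)

lemma bform_diff_right: "bform Q z (x - y) = bform Q z x - bform Q z y"
  by (simp add: bform_def matrix_vector_mult_diff_distrib inner_diff_right)

lemma bform_scaleR_left: "bform Q (a *\<^sub>R x) z = a * bform Q x z"
  by (simp add: bform_def)

lemma bform_scaleR_right: "bform Q z (a *\<^sub>R x) = a * bform Q z x"
  by (simp add: bform_def matrix_vector_mult_scaleR)

lemma bform_0_left [simp]: "bform Q 0 z = 0"
  by (simp add: bform_def)

lemma bform_0_right [simp]: "bform Q z 0 = 0"
  by (simp add: bform_def)

lemmas bform_linear_simps = bform_add_left bform_add_right bform_diff_left bform_diff_right
  bform_scaleR_left bform_scaleR_right

lemma linear_bform: "linear (bform Q x)"
  unfolding bform_def
  by (intro linear_compose[of "(*v) Q" "inner x", unfolded o_def] matrix_vector_mul_linear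
      bounded_linear.linear[OF bounded_linear_inner_right])

lemma bform_eq_0_on_span:
  assumes "\<And>e. e \<in> S \<Longrightarrow> bform Q x e = 0" and "z \<in> span S"
  shows "bform Q x z = 0"
  by (rule linear_eq_0_on_span[OF linear_bform]) (use assms in auto)

lemma continuous_on_bform_diag: "continuous_on A (\<lambda>x. bform Q x x)"
  unfolding bform_def by (intro continuous_intros)

lemma bform_integral:
  "lattice_gram Q \<Longrightarrow> integral_vec x \<Longrightarrow> integral_vec y \<Longrightarrow> bform Q x y \<in> \<int>"
  unfolding bform_def lattice_gram_def integral_vec_def inner_vec_def matrix_vector_mult_def
  by (auto intro!: Ints_sum Ints_mult)

lemma finite_integral_vec_norm_le: "finite {v::real^'n. integral_vec v \<and> norm v \<le> R}"
proof -
  define T where "T = real_of_int ` {-\<lceil>R\<rceil>..\<lceil>R\<rceil>}"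
  have "{v::real^'n. integral_vec v \<and> norm v \<le> R} \<subseteq> vec_lambda ` (PiE UNIV (\<lambda>_. T))"
  proof
    fix v :: "real^'n" assume v: "v \<in> {v. integral_vec v \<and> norm v \<le> R}"
    have "v $ i \<in> T" for i
    proof -
      have "v $ i \<in> \<int>" using v unfolding integral_vec_def by blast
      then obtain k where k: "v $ i = of_int k" by (elim Ints_cases)
      have "\<bar>v $ i\<bar> \<le> R" using v component_le_norm_cart[of v i] by auto
      then have "real_of_int \<bar>k\<bar> \<le> R" using k by simp
      then have "\<bar>k\<bar> \<le> \<lceil>R\<rceil>" by (metis ceiling_mono ceiling_of_int)
      then show ?thesis unfolding T_def using k by (auto simp: abs_le_iff)
    qed
    then have "vec_nth v \<in> PiE UNIV (\<lambda>_. T)" by (simp add: PiE_iff)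
    then show "v \<in> vec_lambda ` (PiE UNIV (\<lambda>_. T))" by (rule image_eqI[rotated]) simp
  qed
  moreover have "finite (PiE (UNIV::'n set) (\<lambda>_. T))" unfolding T_def by (simp add: finite_PiE)
  ultimately show ?thesis using finite_subset by blast
qed

lemma rational_vec_scaleR_integral:
  fixes a :: "real^'n"
  assumes "rational_vec a"
  obtains D where "D > 0" and "integral_vec (D *\<^sub>R a)"
proof -
  have "\<exists>d::int. d > 0 \<and> of_int d * a $ i \<in> \<int>" for i
  proof -
    obtain p q :: int where "q > 0" and "a $ i = of_int p / of_int q"
      using assms unfolding rational_vec_def by (meson Rats_cases')
    then show ?thesis by (intro exI[of _ q]) auto
  qed
  then obtain d :: "'n \<Rightarrow> int" where d: "\<And>i. d i > 0 \<and> of_int (d i) * a $ i \<in> \<int>" by metis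
  define D where "D = real_of_int (\<Prod>i\<in>UNIV. d i)"
  have "(D *\<^sub>R a) $ i \<in> \<int>" for i
  proof -
    have "(\<Prod>j\<in>UNIV. d j) = d i * (\<Prod>j\<in>UNIV-{i}. d j)"
      by (simp add: prod.remove)
    then have "D * a $ i = real_of_int (\<Prod>j\<in>UNIV-{i}. d j) * (of_int (d i) * a $ i)"
      unfolding D_def by simp
    then have "D * a $ i \<in> \<int>" using d[of i] by (metis Ints_mult Ints_of_int)
    then show ?thesis by simp
  qed
  moreover have "D > 0" unfolding D_def using d by (simp add: prod_pos)
  ultimately show ?thesis using that unfolding integral_vec_def by blast
qed

lemma reverse_Cauchy_Schwarz_eq_0:
  fixes a w :: "'a::real_inner" and a0 w0 :: real
  assumes timelike: "a \<bullet> a < a0\<^sup>2" and orth: "a0 * w0 = a \<bullet> w" and nonneg: "w \<bullet> w \<le> w0\<^sup>2"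
  shows "w0 = 0 \<and> w = 0"
proof -
  have "w0 = 0"
  proof (rule ccontr)
    assume "w0 \<noteq> 0"
    then have "w0\<^sup>2 > 0" by simp
    have "(a0 * w0)\<^sup>2 \<le> (a \<bullet> a) * (w \<bullet> w)" using orth Cauchy_Schwarz_ineq[of a w] by simp
    also have "\<dots> \<le> (a \<bullet> a) * w0\<^sup>2" using nonneg by (intro mult_left_mono) auto
    also have "\<dots> < a0\<^sup>2 * w0\<^sup>2" using timelike \<open>w0\<^sup>2 > 0\<close> by simp
    finally show False by (simp add: power_mult_distrib)
  qed
  then show ?thesis
    using nonneg by (metis inner_eq_zero_iff inner_ge_zero order_antisym power_zero_numeral)
qed

definition drop_coord :: "'n \<Rightarrow> real^'n \<Rightarrow> real^'n" where
  "drop_coord i a = (\<chi> j. if j = i then 0 else a $ j)"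

lemma signature_1_nm1_coordinates:
  fixes Q :: "real^'n^'n"
  assumes "signature_1_nm1 Q"
  obtains S :: "real^'n^'n" and i0 where "surj ((*v) S)"
    and "\<And>a b. bform Q (S *v a) (S *v b) = a $ i0 * b $ i0 - drop_coord i0 a \<bullet> drop_coord i0 b"
proof -
  obtain S :: "real^'n^'n" and i0 where S: "invertible S" and
    D: "transpose S ** Q ** S = (\<chi> i j. if i = j then (if i = i0 then 1 else -1) else 0)"
    using assms unfolding signature_1_nm1_def by blast
  have "bform Q (S *v a) (S *v b) = a $ i0 * b $ i0 - drop_coord i0 a \<bullet> drop_coord i0 b" for a b
  proof -
    have "S *v a = a v* transpose S" by (metis transpose_matrix_vector transpose_transpose)
    then have "bform Q (S *v a) (S *v b) = a \<bullet> (transpose S *v (Q *v (S *v b)))"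
      unfolding bform_def dot_lmul_matrix[symmetric] by simp
    also have "\<dots> = a \<bullet> ((transpose S ** Q ** S) *v b)"
      by (simp add: matrix_vector_mul_assoc matrix_mul_assoc)
    also have "\<dots> = (\<Sum>i\<in>UNIV. (if i = i0 then a $ i * b $ i else 0)
                        - (if i = i0 then 0 else a $ i * b $ i))"
      unfolding D inner_vec_def matrix_vector_mult_def
      by (intro sum.cong) (auto simp: if_distrib[of "\<lambda>z. z * _"] cong: if_cong)
    also have "\<dots> = a $ i0 * b $ i0 - drop_coord i0 a \<bullet> drop_coord i0 b"
      unfolding sum_subtractf drop_coord_def inner_vec_def
      by (simp add: if_distrib[of "\<lambda>z. z * _"] cong: if_cong)
    finally show ?thesis .
  qed
  moreover obtain S' where "S ** S' = mat 1" using S unfolding invertible_def by blast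
  then have "surj ((*v) S)" by (intro surjI[of _ "(*v) S'"]) (simp add: matrix_vector_mul_assoc)
  ultimately show ?thesis using that by blast
qed

lemma signature_orthogonal_to_positive:
  fixes Q :: "real^'n^'n"
  assumes sig: "signature_1_nm1 Q" and pos: "bform Q x x > 0" and orth: "bform Q x y = 0"
  shows "y = 0 \<or> bform Q y y < 0"
proof (rule ccontr)
  assume "\<not> (y = 0 \<or> bform Q y y < 0)"
  then have "y \<noteq> 0" and nonneg: "bform Q y y \<ge> 0" by auto
  obtain S :: "real^'n^'n" and i0 where surj: "surj ((*v) S)" and form:
    "\<And>a b. bform Q (S *v a) (S *v b) = a $ i0 * b $ i0 - drop_coord i0 a \<bullet> drop_coord i0 b"
    using signature_1_nm1_coordinates[OF sig] by blast
  obtain u w where x: "x = S *v u" and y: "y = S *v w" using surj by (metis surjD)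
  have "w $ i0 = 0 \<and> drop_coord i0 w = 0"
    using pos orth nonneg form[of u u] form[of u w] form[of w w] unfolding x y
    by (intro reverse_Cauchy_Schwarz_eq_0) (simp_all add: power2_eq_square)
  then have "w = 0" by (auto simp: vec_eq_iff drop_coord_def split: if_splits)
  then show False using \<open>y \<noteq> 0\<close> y by simp
qed

lemma signature_negative_definite_on_orthogonal:
  fixes Q :: "real^'n^'n"
  assumes sig: "signature_1_nm1 Q" and pos: "bform Q x x > 0"
  obtains m where "m > 0" and "\<And>y. bform Q x y = 0 \<Longrightarrow> bform Q y y \<le> - m * (norm y)\<^sup>2"
proof -
  define K where "K = {y. bform Q x y = 0} \<inter> sphere 0 1"
  have "compact K"
    unfolding K_def bform_def by (intro closed_Int_compact compact_sphere closed_Collect_eq continuous_intros)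
  have "\<exists>M<0. \<forall>y\<in>K. bform Q y y \<le> M"
  proof (cases "K = {}")
    case False
    obtain y0 where y0: "y0 \<in> K" and max: "\<forall>y\<in>K. bform Q y y \<le> bform Q y0 y0"
      using continuous_attains_sup[OF \<open>compact K\<close> False continuous_on_bform_diag] by blast
    have "bform Q y0 y0 < 0"
      using y0 signature_orthogonal_to_positive[OF sig pos, of y0] unfolding K_def by auto
    then show ?thesis using max by blast
  qed (intro exI[of _ "-1"], simp)
  then obtain M where "M < 0" and M: "\<forall>y\<in>K. bform Q y y \<le> M" by blast
  show thesis
  proof (rule that[of "- M"])
    fix y assume orth: "bform Q x y = 0"
    show "bform Q y y \<le> - (- M) * (norm y)\<^sup>2"
    proof (cases "y = 0")
      case False
      then have "(1 / norm y) *\<^sub>R y \<in> K" unfolding K_def using orth by (simp add: bform_scaleR_right)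
      then have "bform Q ((1 / norm y) *\<^sub>R y) ((1 / norm y) *\<^sub>R y) \<le> M" using M by blast
      then have "bform Q y y / (norm y)\<^sup>2 \<le> M"
        by (simp add: bform_scaleR_left bform_scaleR_right power2_eq_square)
      then show ?thesis using False by (simp add: divide_le_eq)
    qed simp
  qed (use \<open>M < 0\<close> in simp)
qed

lemma signature_orthogonal_bounded_below_norm_bound:
  fixes Q :: "real^'n^'n"
  assumes sig: "signature_1_nm1 Q" and pos: "bform Q x x > 0"
  obtains C where "\<And>y. bform Q x y = 0 \<Longrightarrow> - N < bform Q y y \<Longrightarrow> norm y \<le> C"
proof -
  obtain m where "m > 0" and negdef: "\<And>y. bform Q x y = 0 \<Longrightarrow> bform Q y y \<le> - m * (norm y)\<^sup>2"
    using signature_negative_definite_on_orthogonal[OF sig pos] by blast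
  have "norm y \<le> sqrt (N / m)" if "bform Q x y = 0" and "- N < bform Q y y" for y
  proof (rule real_le_rsqrt)
    show "(norm y)\<^sup>2 \<le> N / m" using negdef[OF that(1)] that(2) \<open>m > 0\<close> by (simp add: field_simps)
  qed
  then show thesis using that by blast
qed

lemma Ints_mult_neg_abs_le:
  fixes a b K :: "'a::linordered_idom"
  assumes "a \<in> \<int>" and "b \<in> \<int>" and "a * b < 0" and "- K \<le> a * b"
  shows "\<bar>a\<bar> \<le> K \<and> \<bar>b\<bar> \<le> K"
proof -
  have "1 \<le> \<bar>a\<bar>" and "1 \<le> \<bar>b\<bar>" using assms by (auto intro!: Ints_nonzero_abs_ge1)
  moreover have "\<bar>a\<bar> * \<bar>b\<bar> \<le> K" using assms by (simp add: abs_mult[symmetric])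
  moreover have "\<bar>a\<bar> \<le> \<bar>a\<bar> * \<bar>b\<bar>" and "\<bar>b\<bar> \<le> \<bar>a\<bar> * \<bar>b\<bar>"
    using calculation(1,2) mult_left_mono[of 1 "\<bar>b\<bar>" "\<bar>a\<bar>"] mult_right_mono[of 1 "\<bar>a\<bar>" "\<bar>b\<bar>"]
    by simp_all
  ultimately show ?thesis by linarith
qed

lemma isotropic_plane_coefficients_bounded:
  fixes c d lam mu N :: real
  assumes ints: "c \<in> \<int>" "d \<in> \<int>" "mu * c \<in> \<int>" "lam * c + mu * d \<in> \<int>" and "c \<noteq> 0"
    and lower: "- N < 2 * lam * mu * c + mu\<^sup>2 * d"
    and neg: "2 * lam * mu * c + mu\<^sup>2 * d < 0 \<or> lam = 0 \<and> mu = 0"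
  shows "\<bar>mu\<bar> \<le> N * c\<^sup>2 \<and> \<bar>lam\<bar> \<le> N * c\<^sup>2 * (1 + \<bar>d\<bar>)"
proof (cases "lam = 0 \<and> mu = 0")
  case False
  \<comment> \<open>\<alpha> = (p, E) and y = 2c(p, F) - d\<alpha>, whose product is c^2 (p^2)\<close>
  define \<alpha> y where "\<alpha> = mu * c" and "y = 2 * c * (lam * c + mu * d) - d * (mu * c)"
  have prod: "\<alpha> * y = c\<^sup>2 * (2 * lam * mu * c + mu\<^sup>2 * d)"
    unfolding \<alpha>_def y_def by (simp add: power2_eq_square algebra_simps)
  have "c\<^sup>2 > 0" using \<open>c \<noteq> 0\<close> by simp
  have "\<alpha> * y < 0" unfolding prod using neg False \<open>c\<^sup>2 > 0\<close> by (simp add: mult_pos_neg)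
  moreover have "c\<^sup>2 * (- N) \<le> \<alpha> * y"
    unfolding prod using lower \<open>c\<^sup>2 > 0\<close> by (intro mult_left_mono) auto
  moreover have "y \<in> \<int>" unfolding y_def by (rule Ints_diff; rule Ints_mult) (use ints in auto)
  ultimately have bounds: "\<bar>\<alpha>\<bar> \<le> N * c\<^sup>2 \<and> \<bar>y\<bar> \<le> N * c\<^sup>2"
    using Ints_mult_neg_abs_le[of \<alpha> y "N * c\<^sup>2"] ints(3) unfolding \<alpha>_def by (simp add: mult.commute)
  have "1 \<le> \<bar>c\<bar>" using ints(1) \<open>c \<noteq> 0\<close> by (rule Ints_nonzero_abs_ge1)
  then have "1 \<le> 2 * c\<^sup>2" using one_le_power[of "\<bar>c\<bar>" 2] by simp
  have "\<bar>mu\<bar> \<le> \<bar>\<alpha>\<bar>"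
    unfolding \<alpha>_def abs_mult using \<open>1 \<le> \<bar>c\<bar>\<close> by (simp add: mult_le_cancel_left1)
  moreover have "lam = (y - d * \<alpha>) / (2 * c\<^sup>2)"
    unfolding \<alpha>_def y_def using \<open>c \<noteq> 0\<close> by (simp add: field_simps power2_eq_square)
  then have "\<bar>lam\<bar> \<le> \<bar>y\<bar> + \<bar>d\<bar> * \<bar>\<alpha>\<bar>"
    using \<open>1 \<le> 2 * c\<^sup>2\<close> by (simp add: abs_divide divide_le_eq abs_mult[symmetric] abs_triangle_ineq4
        order_trans[OF abs_triangle_ineq4] mult_le_cancel_left1)
  moreover have "\<bar>d\<bar> * \<bar>\<alpha>\<bar> \<le> \<bar>d\<bar> * (N * c\<^sup>2)" using bounds by (intro mult_left_mono) auto
  ultimately have "\<bar>mu\<bar> \<le> N * c\<^sup>2 \<and> \<bar>lam\<bar> \<le> N * c\<^sup>2 + \<bar>d\<bar> * (N * c\<^sup>2)"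
    using bounds by linarith
  then show ?thesis by (simp add: algebra_simps)
qed (use lower in simp)

lemma bform_isotropic_plane:
  assumes "transpose Q = Q" and "bform Q E E = 0"
  shows "bform Q (lam *\<^sub>R E + mu *\<^sub>R F) E = mu * bform Q E F"
    and "bform Q (lam *\<^sub>R E + mu *\<^sub>R F) F = lam * bform Q E F + mu * bform Q F F"
    and "bform Q (lam *\<^sub>R E + mu *\<^sub>R F) (lam *\<^sub>R E + mu *\<^sub>R F)
           = 2 * lam * mu * bform Q E F + mu\<^sup>2 * bform Q F F"
  using assms bform_sym[OF assms(1), of F E]
  by (simp_all add: bform_linear_simps power2_eq_square algebra_simps)

lemma isotropic_plane_orthogonal_decomposition:
  assumes "transpose Q = Q" and "bform Q E E = 0" and "bform Q E F \<noteq> 0"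
  obtains lam mu q where "v = (lam *\<^sub>R E + mu *\<^sub>R F) + q"
    and "\<And>z. z \<in> span {E, F} \<Longrightarrow> bform Q q z = 0"
proof -
  define mu where "mu = bform Q v E / bform Q E F"
  define lam where "lam = (bform Q v F - mu * bform Q F F) / bform Q E F"
  define q where "q = v - (lam *\<^sub>R E + mu *\<^sub>R F)"
  have "bform Q q E = 0" and "bform Q q F = 0"
    using bform_isotropic_plane[OF assms(1,2), of lam mu F] assms(3)
    by (simp_all add: q_def bform_diff_left mu_def lam_def field_simps)
  then have "bform Q q z = 0" if "z \<in> span {E, F}" for z
    using bform_eq_0_on_span[OF _ that] by blast
  then show thesis using that[of lam mu q] unfolding q_def by simp
qed

lemma isotropic_pair_independent:
  assumes "transpose Q = Q" and "bform Q E E = 0" and "bform Q E F \<noteq> 0"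
  shows "E \<noteq> F" and "independent {E, F}"
proof -
  show "E \<noteq> F" using assms(2,3) by auto
  have "E \<notin> span {F}"
  proof
    assume "E \<in> span {F}"
    then obtain k where "E = k *\<^sub>R F" unfolding span_singleton by blast
    then show False
      using assms bform_isotropic_plane(1,3)[OF assms(1,2), of 0 k F] by (simp add: bform_scaleR_left)
  qed
  moreover have "F \<noteq> 0" using assms(3) by auto
  ultimately show "independent {E, F}" by (simp add: independent_insertI)
qed

lemma isotropic_plane_norm_bound:
  assumes g: "lattice_gram Q" and EF: "integral_vec E" "integral_vec F" "bform Q E E = 0" "bform Q E F \<noteq> 0"
    and p: "p = lam *\<^sub>R E + mu *\<^sub>R F" "bform Q p E \<in> \<int>" "bform Q p F \<in> \<int>"
    and lower: "- N < bform Q p p" and neg: "bform Q p p < 0 \<or> p = 0"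
  shows "norm p \<le> N * (bform Q E F)\<^sup>2 * ((1 + \<bar>bform Q F F\<bar>) * norm E + norm F)"
proof -
  have sym: "transpose Q = Q" using g unfolding lattice_gram_def by blast
  note coords = bform_isotropic_plane[OF sym EF(3), of lam mu F]
  have "lam = 0 \<and> mu = 0" if "p = 0"
    using that p(1) coords(1,2) EF(4) by auto
  then have "\<bar>mu\<bar> \<le> N * (bform Q E F)\<^sup>2 \<and> \<bar>lam\<bar> \<le> N * (bform Q E F)\<^sup>2 * (1 + \<bar>bform Q F F\<bar>)"
    using p lower neg coords bform_integral[OF g] EF
    by (intro isotropic_plane_coefficients_bounded) (auto simp: mult.commute)
  then have "\<bar>lam\<bar> * norm E + \<bar>mu\<bar> * norm F
      \<le> N * (bform Q E F)\<^sup>2 * (1 + \<bar>bform Q F F\<bar>) * norm E + N * (bform Q E F)\<^sup>2 * norm F"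
    by (intro add_mono mult_right_mono) auto
  moreover have "norm p \<le> \<bar>lam\<bar> * norm E + \<bar>mu\<bar> * norm F"
    unfolding p(1) using norm_triangle_ineq[of "lam *\<^sub>R E" "mu *\<^sub>R F"] by simp
  ultimately show ?thesis by (simp add: algebra_simps)
qed

lemma rational_2plane_integral_isotropic_basis:
  assumes g: "lattice_gram Q" and sig: "signature_1_nm1 Q" and P: "rational_2plane P"
    and w: "w \<in> P" "rational_vec w" "w \<noteq> 0" "bform Q w w = 0"
    and x0: "x0 \<in> P" "bform Q x0 x0 > 0"
  obtains E F where "integral_vec E" "integral_vec F" "bform Q E E = 0" "bform Q E F \<noteq> 0"
    and "P = span {E, F}"
proof -
  have sym: "transpose Q = Q" using g unfolding lattice_gram_def by blast
  obtain a b where ab: "rational_vec a" "rational_vec b" and Pab: "P = span {a, b}" and "dim P = 2"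
    using P unfolding rational_2plane_def by blast
  obtain Dw where "Dw > 0" and E: "integral_vec (Dw *\<^sub>R w)"
    using rational_vec_scaleR_integral[OF w(2)] by blast
  define E where "E = Dw *\<^sub>R w"
  have "E \<in> P" "E \<noteq> 0" "bform Q E E = 0"
    unfolding E_def using w \<open>Dw > 0\<close> Pab by (auto simp: span_scale bform_scaleR_left bform_scaleR_right)
  have "bform Q E a \<noteq> 0 \<or> bform Q E b \<noteq> 0"
  proof (rule ccontr)
    assume "\<not> ?thesis"
    then have "bform Q E x0 = 0" using bform_eq_0_on_span[of "{a, b}" Q E x0] x0 Pab by auto
    then show False
      using signature_orthogonal_to_positive[OF sig x0(2), of E] \<open>E \<noteq> 0\<close> \<open>bform Q E E = 0\<close>
        bform_sym[OF sym, of E x0] by simp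
  qed
  then obtain f where "rational_vec f" "f \<in> P" "bform Q E f \<noteq> 0"
    using ab Pab by (metis insertCI span_base)
  then obtain Df where "Df > 0" and F: "integral_vec (Df *\<^sub>R f)"
    using rational_vec_scaleR_integral by blast
  define F where "F = Df *\<^sub>R f"
  have "F \<in> P" "bform Q E F \<noteq> 0"
    unfolding F_def using \<open>f \<in> P\<close> \<open>bform Q E f \<noteq> 0\<close> \<open>Df > 0\<close> Pab
    by (auto simp: span_scale bform_scaleR_right)
  have "P \<subseteq> span {E, F}"
    using isotropic_pair_independent[OF sym \<open>bform Q E E = 0\<close> \<open>bform Q E F \<noteq> 0\<close>]
      \<open>E \<in> P\<close> \<open>F \<in> P\<close> \<open>dim P = 2\<close> by (intro card_ge_dim_independent) auto
  moreover have "span {E, F} \<subseteq> P"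
    using \<open>E \<in> P\<close> \<open>F \<in> P\<close> Pab by (intro span_minimal) auto
  ultimately show thesis
    using that E F \<open>bform Q E E = 0\<close> \<open>bform Q E F \<noteq> 0\<close> unfolding E_def F_def by blast
qed

lemma integral_vec_orthogonal_to_positive_bounded:
  assumes g: "lattice_gram Q" and sig: "signature_1_nm1 Q"
    and EF: "integral_vec E" "integral_vec F" "bform Q E E = 0" "bform Q E F \<noteq> 0"
    and x0: "x0 \<in> span {E, F}" "bform Q x0 x0 > 0"
  obtains R where "\<And>v x. integral_vec v \<Longrightarrow> x \<in> span {E, F} \<Longrightarrow> bform Q x x > 0 \<Longrightarrow>
    bform Q v x = 0 \<Longrightarrow> - N < bform Q v v \<Longrightarrow> norm v \<le> R"
proof -
  have sym: "transpose Q = Q" using g unfolding lattice_gram_def by blast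
  obtain C where C: "\<And>y. bform Q x0 y = 0 \<Longrightarrow> - N < bform Q y y \<Longrightarrow> norm y \<le> C"
    using signature_orthogonal_bounded_below_norm_bound[OF sig x0(2)] by blast
  define R where "R = N * (bform Q E F)\<^sup>2 * ((1 + \<bar>bform Q F F\<bar>) * norm E + norm F) + C"
  have "norm v \<le> R" if v: "integral_vec v" and x: "x \<in> span {E, F}" "bform Q x x > 0"
    and vx: "bform Q v x = 0" and vv: "- N < bform Q v v" for v x
  proof -
    obtain lam mu q where v_split: "v = (lam *\<^sub>R E + mu *\<^sub>R F) + q"
      and q_orth: "\<And>z. z \<in> span {E, F} \<Longrightarrow> bform Q q z = 0"
      using isotropic_plane_orthogonal_decomposition[OF sym EF(3,4)] by blast
    define p where "p = lam *\<^sub>R E + mu *\<^sub>R F"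
    have "p \<in> span {E, F}" unfolding p_def by (intro span_add span_scale span_base) auto
    then have "bform Q v v = bform Q p p + bform Q q q"
      using q_orth bform_sym[OF sym, of p q] unfolding v_split p_def[symmetric]
      by (simp add: bform_linear_simps)
    moreover have "bform Q x p = 0"
      using vx q_orth[OF x(1)] bform_sym[OF sym] unfolding v_split p_def[symmetric]
      by (simp add: bform_add_left)
    then have pp: "bform Q p p < 0 \<or> p = 0"
      using signature_orthogonal_to_positive[OF sig x(2)] by blast
    moreover have "bform Q q q \<le> 0"
      using signature_orthogonal_to_positive[OF sig x(2)] q_orth[OF x(1)] bform_sym[OF sym, of x q]
      by fastforce
    ultimately have "- N < bform Q p p" and "- N < bform Q q q" using vv by auto
    have "bform Q p E = bform Q v E" and "bform Q p F = bform Q v F"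
      using q_orth[of E] q_orth[of F] unfolding v_split p_def[symmetric]
      by (simp_all add: bform_add_left span_base)
    then have "bform Q p E \<in> \<int>" and "bform Q p F \<in> \<int>"
      using bform_integral[OF g v] EF(1,2) by simp_all
    then have "norm p \<le> N * (bform Q E F)\<^sup>2 * ((1 + \<bar>bform Q F F\<bar>) * norm E + norm F)"
      using isotropic_plane_norm_bound[OF g EF p_def] \<open>- N < bform Q p p\<close> pp by blast
    moreover have "norm q \<le> C"
      using C q_orth[OF x0(1)] bform_sym[OF sym, of x0 q] \<open>- N < bform Q q q\<close> by simp
    ultimately show ?thesis
      using norm_triangle_ineq[of p q] unfolding v_split p_def[symmetric] R_def by simp
  qed
  then show thesis using that by blast
qed

theorem lemma3p2:
  fixes Q :: "real^'n^'n" and h :: "real^'n" and P :: "(real^'n) set" and N :: real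
  assumes "lattice_gram Q"
    and "signature_1_nm1 Q"
    and "integral_vec h" and "bform Q h h > 0"
    and "N > 0"
    and "rational_2plane P"
    and "\<exists>w. w \<in> P \<and> rational_vec w \<and> w \<noteq> 0 \<and> bform Q w w = 0"
  shows "finite {v. integral_vec v \<and>
            (\<exists>x. bform Q v x = 0 \<and> x \<in> P \<and> x \<in> pos_cone Q h) \<and>
            bform Q v v > - N}"
proof (cases "\<exists>x0. x0 \<in> P \<and> x0 \<in> pos_cone Q h")
  case True
  then obtain x0 where x0: "x0 \<in> P" "bform Q x0 x0 > 0" unfolding pos_cone_def by blast
  obtain w where "w \<in> P" "rational_vec w" "w \<noteq> 0" "bform Q w w = 0" using assms(7) by blast
  then obtain E F where EF: "integral_vec E" "integral_vec F" "bform Q E E = 0" "bform Q E F \<noteq> 0"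
    and P: "P = span {E, F}"
    using rational_2plane_integral_isotropic_basis[OF assms(1,2,6) _ _ _ _ x0] by blast
  then obtain R where R: "\<And>v x. integral_vec v \<Longrightarrow> x \<in> span {E, F} \<Longrightarrow> bform Q x x > 0 \<Longrightarrow>
      bform Q v x = 0 \<Longrightarrow> - N < bform Q v v \<Longrightarrow> norm v \<le> R"
    using integral_vec_orthogonal_to_positive_bounded[OF assms(1,2) EF] x0 by blast
  have "{v. integral_vec v \<and> (\<exists>x. bform Q v x = 0 \<and> x \<in> P \<and> x \<in> pos_cone Q h) \<and> bform Q v v > - N}
      \<subseteq> {v. integral_vec v \<and> norm v \<le> R}"
    using R unfolding P pos_cone_def by blast
  then show ?thesis using finite_integral_vec_norm_le finite_subset by blast
qed (auto intro!: finite_subset[of _ "{}"])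

end
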